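(* Let $C$ be a nonempty closed convex subset of a real Hilbert space $H$, and let $A,F:H\to H$ be Lipschitz continuous with constants $L_A,L_F$, respectively. Assume that $A$ is $\lambda$-strongly monotone for some $\lambda>0$ and that the couple $(A,F)$ is $\gamma$-strongly monotone on $H$ for some $\gamma>0$. Then $\mathrm{GVI}(A,F,C)$ admits a unique solution in $H$.
   Context: $\mathrm{GVI}(A,F,C)$: find $x^*\in H$ with $Fx^*\in C$ and $\langle Ax^*,y-Fx^*\rangle\ge0$ for all $y\in C$. $A$ is $\lambda$-strongly monotone if $\langle Ax-Ay,x-y\rangle\ge\lambda\|x-y\|^2$ for all $x,y$. The couple $(A,F)$ is $\gamma$-strongly monotone if $\langle Ax-Ay,Fx-Fy\rangle\ge\gamma\|x-y\|^2$ for all $x,y\in H$. *)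

theory Defs
  imports "HOL-Analysis.Analysis"
begin

definition strongly_monotone :: "real \<Rightarrow> ('a::real_inner \<Rightarrow> 'a) \<Rightarrow> bool" where
  "strongly_monotone lam A \<longleftrightarrow>
     (\<forall>x y. inner (A x - A y) (x - y) \<ge> lam * (norm (x - y))\<^sup>2)"

definition couple_strongly_monotone ::
    "real \<Rightarrow> ('a::real_inner \<Rightarrow> 'a) \<Rightarrow> ('a \<Rightarrow> 'a) \<Rightarrow> bool" where
  "couple_strongly_monotone gam A F \<longleftrightarrow>
     (\<forall>x y. inner (A x - A y) (F x - F y) \<ge> gam * (norm (x - y))\<^sup>2)"

definition GVI_solution ::
    "('a::real_inner \<Rightarrow> 'a) \<Rightarrow> ('a \<Rightarrow> 'a) \<Rightarrow> 'a set \<Rightarrow> 'a \<Rightarrow> bool" where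
  "GVI_solution A F C x \<longleftrightarrow> F x \<in> C \<and> (\<forall>y\<in>C. inner (A x) (y - F x) \<ge> 0)"

end

theory Submission
  imports Defs
begin

(*
  Substituting w = A x turns GVI(A,F,C) into: find w with G w \<in> C and <w, y - G w> \<ge> 0 for y \<in> C,
  where G = F \<circ> A\<inverse>.  A strongly monotone Lipschitz operator B is bijective (for small \<mu> the
  forward step x \<mapsto> x - \<mu> B x is a contraction), and its inverse is again strongly monotone and
  Lipschitz.  Strong monotonicity of the couple (A,F) makes G strongly monotone, so substituting
  z = G w leaves the classical variational inequality for G\<inverse>: z \<in> C and <G\<inverse> z, y - z> \<ge> 0.
  It is solved by a fixed point of the contraction z \<mapsto> P\<^sub>C (z - \<mu> G\<inverse> z), where P\<^sub>C is the
  nearest-point projection onto C (minimizing sequences are Cauchy by the parallelogram law).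
  Uniqueness is immediate from the strong monotonicity of the couple.
*)

lemma infdist_minimizing_sequence:
  fixes a :: "'a::metric_space"
  assumes "C \<noteq> {}"
  obtains X where "\<And>n. X n \<in> C" "(\<lambda>n. dist a (X n)) \<longlonglongrightarrow> infdist a C"
proof -
  have "\<exists>x\<in>C. dist a x < infdist a C + 1 / Suc n" for n
    using cINF_less_iff[of C "dist a" "infdist a C + 1 / Suc n"] assms
    by (auto simp: infdist_notempty intro: bdd_belowI2[of _ 0])
  then obtain X where X: "\<And>n. X n \<in> C" "\<And>n. dist a (X n) < infdist a C + 1 / Suc n"
    by metis
  have "norm (dist a (X n) - infdist a C) < 1 / Suc n" for n
    using X(2)[of n] infdist_le[OF X(1)[of n], of a] unfolding real_norm_def by arith
  then have "(\<lambda>n. dist a (X n) - infdist a C) \<longlonglongrightarrow> 0"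
    by (rule LIMSEQ_norm_0)
  then have "(\<lambda>n. (dist a (X n) - infdist a C) + infdist a C) \<longlonglongrightarrow> 0 + infdist a C"
    by (intro tendsto_add) auto
  with X(1) show thesis by (intro that) auto
qed

lemma convex_dist_sq_le_infdist:
  fixes a :: "'a::real_inner"
  assumes "convex C" "x \<in> C" "y \<in> C"
  shows "(dist x y)\<^sup>2 \<le> 2 * (dist a x)\<^sup>2 + 2 * (dist a y)\<^sup>2 - 4 * (infdist a C)\<^sup>2"
proof -
  define u v where "u = a - x" and "v = a - y"
  have "(1/2) *\<^sub>R x + (1/2) *\<^sub>R y \<in> C"
    using convexD[OF assms, of "1/2" "1/2"] by simp
  then have "infdist a C \<le> norm (a - ((1/2) *\<^sub>R x + (1/2) *\<^sub>R y))"
    by (metis infdist_le dist_norm)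
  also have "a - ((1/2) *\<^sub>R x + (1/2) *\<^sub>R y) = (1/2) *\<^sub>R (u + v)"
    unfolding u_def v_def by (simp add: algebra_simps) (metis field_sum_of_halves scaleR_add_left scaleR_one)
  finally have "2 * infdist a C \<le> norm (u + v)" by simp
  then have mid: "4 * (infdist a C)\<^sup>2 \<le> (norm (u + v))\<^sup>2"
    using infdist_nonneg power_mono[of "2 * infdist a C" "norm (u + v)" 2] by fastforce
  have parallelogram: "(norm (u - v))\<^sup>2 + (norm (u + v))\<^sup>2 = 2 * (norm u)\<^sup>2 + 2 * (norm v)\<^sup>2"
    by (simp add: power2_norm_eq_inner inner_diff inner_add inner_commute)
  have "dist x y = norm (u - v)" "dist a x = norm u" "dist a y = norm v"
    unfolding u_def v_def dist_norm by (simp_all add: norm_minus_commute)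
  then show ?thesis using mid parallelogram by simp
qed

lemma convex_minimizing_sequence_Cauchy:
  fixes a :: "'a::real_inner"
  assumes "convex C" "\<And>n. X n \<in> C" "(\<lambda>n. dist a (X n)) \<longlonglongrightarrow> infdist a C"
  shows "Cauchy X"
proof (rule metric_CauchyI)
  fix r :: real
  assume "r > 0"
  define \<delta> where "\<delta> n = (dist a (X n))\<^sup>2 - (infdist a C)\<^sup>2" for n
  have "\<delta> \<longlonglongrightarrow> (infdist a C)\<^sup>2 - (infdist a C)\<^sup>2"
    unfolding \<delta>_def by (intro tendsto_intros assms(3))
  then have "\<forall>\<^sub>F n in sequentially. \<delta> n < r\<^sup>2 / 4"
    using \<open>r > 0\<close> by (intro order_tendstoD) auto
  then obtain N where N: "\<And>n. n \<ge> N \<Longrightarrow> \<delta> n < r\<^sup>2 / 4"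
    by (auto simp: eventually_sequentially)
  have "dist (X m) (X n) < r" if "m \<ge> N" "n \<ge> N" for m n
  proof -
    have "(dist (X m) (X n))\<^sup>2 \<le> 2 * \<delta> m + 2 * \<delta> n"
      using convex_dist_sq_le_infdist[OF assms(1) assms(2)[of m] assms(2)[of n], of a]
      unfolding \<delta>_def by (simp add: algebra_simps)
    also have "\<dots> < r\<^sup>2"
      using N[OF that(1)] N[OF that(2)] by linarith
    finally show ?thesis
      using \<open>r > 0\<close> by (simp add: power_less_imp_less_base)
  qed
  then show "\<exists>N. \<forall>m\<ge>N. \<forall>n\<ge>N. dist (X m) (X n) < r"
    by blast
qed

lemma closed_convex_nearest_point_exists:
  fixes a :: "'a::{real_inner,complete_space}"
  assumes "C \<noteq> {}" "closed C" "convex C"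
  shows "\<exists>p\<in>C. \<forall>y\<in>C. dist a p \<le> dist a y"
proof -
  obtain X where X: "\<And>n. X n \<in> C" "(\<lambda>n. dist a (X n)) \<longlonglongrightarrow> infdist a C"
    using infdist_minimizing_sequence[OF assms(1)] by metis
  obtain p where p: "X \<longlonglongrightarrow> p"
    using convex_minimizing_sequence_Cauchy[OF assms(3) X] Cauchy_convergent_iff convergent_def
    by blast
  have "p \<in> C"
    using closed_sequentially[OF assms(2)] X(1) p by blast
  moreover have "dist a p = infdist a C"
    using tendsto_unique[OF _ tendsto_dist[OF tendsto_const p] X(2)] by simp
  ultimately show ?thesis
    by (metis infdist_le)
qed

(* The library's closest_point needs heine_borel; in a Hilbert space the nearest point of a closed
   convex set exists by the preceding lemma instead. *)
definition metric_proj :: "'a::real_inner set \<Rightarrow> 'a \<Rightarrow> 'a" where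
  "metric_proj C a = (SOME p. p \<in> C \<and> (\<forall>y\<in>C. dist a p \<le> dist a y))"

context
  fixes C :: "'a::{real_inner,complete_space} set"
  assumes C: "C \<noteq> {}" "closed C" "convex C"
begin

lemma metric_proj_nearest: "metric_proj C a \<in> C \<and> (\<forall>y\<in>C. dist a (metric_proj C a) \<le> dist a y)"
  unfolding metric_proj_def using closed_convex_nearest_point_exists[OF C] by (rule someI2_bex)

lemma metric_proj_in: "metric_proj C a \<in> C"
  using metric_proj_nearest by blast

lemma metric_proj_inner_le: "y \<in> C \<Longrightarrow> inner (a - metric_proj C a) (y - metric_proj C a) \<le> 0"
  using any_closest_point_dot[OF C(3,2)] metric_proj_nearest by blast

lemma metric_proj_dist_le: "dist (metric_proj C a) (metric_proj C b) \<le> dist a b"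
proof -
  have "inner (a - metric_proj C a) (metric_proj C b - metric_proj C a) \<le> 0"
    and "inner (b - metric_proj C b) (metric_proj C a - metric_proj C b) \<le> 0"
    by (simp_all add: metric_proj_inner_le metric_proj_in)
  then show ?thesis
    unfolding dist_norm norm_le
    using inner_ge_zero[of "(a - metric_proj C a) - (b - metric_proj C b)"]
    by (simp add: inner_add inner_diff inner_commute)
qed

end

lemma strongly_monotone_dist_le:
  assumes "strongly_monotone c B"
  shows "c * dist x y \<le> dist (B x) (B y)"
proof (cases "x = y")
  case False
  have "c * norm (x - y) * norm (x - y) \<le> norm (B x - B y) * norm (x - y)"
    using assms norm_cauchy_schwarz[of "B x - B y" "x - y"]
    unfolding strongly_monotone_def by (smt (verit) power2_eq_square mult.assoc)
  then show ?thesis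
    using False by (simp add: dist_norm)
qed simp

lemma strongly_monotone_inj:
  assumes "c > 0" "strongly_monotone c B"
  shows "inj B"
proof (rule injI)
  fix x y
  assume "B x = B y"
  then show "x = y"
    using strongly_monotone_dist_le[OF assms(2), of x y] assms(1)
    by (simp add: mult_le_0_iff)
qed

lemma strongly_monotone_forward_step_contraction:
  assumes "c > 0" "strongly_monotone c B" "L-lipschitz_on UNIV B"
  obtains \<mu> k where "\<mu> > 0" "0 \<le> k" "k < 1"
    "\<And>x y. dist (x - \<mu> *\<^sub>R B x) (y - \<mu> *\<^sub>R B y) \<le> k * dist x y"
proof -
  \<comment> \<open>enlarging L to at least c keeps the radicand in the definition of k nonnegative\<close>
  define M where "M = max L c"
  have "M-lipschitz_on UNIV B" "c \<le> M" "M > 0"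
    using lipschitz_on_mono[OF assms(3)] assms(1) unfolding M_def by auto
  define \<mu> k where "\<mu> = c / M\<^sup>2" and "k = sqrt (1 - c\<^sup>2 / M\<^sup>2)"
  have "\<mu> > 0"
    unfolding \<mu>_def using assms(1) \<open>M > 0\<close> by simp
  have "c\<^sup>2 / M\<^sup>2 \<le> 1"
    using \<open>c \<le> M\<close> assms(1) by (simp add: power_mono)
  then have "0 \<le> k" "k < 1" "k\<^sup>2 = 1 - c\<^sup>2 / M\<^sup>2"
    unfolding k_def using assms(1) \<open>M > 0\<close> by (auto simp: real_sqrt_lt_1_iff)
  have "dist (x - \<mu> *\<^sub>R B x) (y - \<mu> *\<^sub>R B y) \<le> k * dist x y" for x y
  proof -
    define d e where "d = x - y" and "e = B x - B y"
    have de: "c * (norm d)\<^sup>2 \<le> inner e d" "norm e \<le> M * norm d"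
      using assms(2) lipschitz_onD[OF \<open>M-lipschitz_on UNIV B\<close>, of x y]
      unfolding d_def e_def strongly_monotone_def dist_norm by blast+
    have "(norm (d - \<mu> *\<^sub>R e))\<^sup>2 = (norm d)\<^sup>2 - 2 * \<mu> * inner e d + \<mu>\<^sup>2 * (norm e)\<^sup>2"
      unfolding power2_norm_eq_inner
      by (simp add: inner_diff_left inner_diff_right inner_commute[of d e] power2_eq_square algebra_simps)
    also have "\<dots> \<le> (norm d)\<^sup>2 - 2 * \<mu> * (c * (norm d)\<^sup>2) + \<mu>\<^sup>2 * (M * norm d)\<^sup>2"
    proof -
      have "\<mu> * (c * (norm d)\<^sup>2) \<le> \<mu> * inner e d"
        using de(1) \<open>\<mu> > 0\<close> by (simp add: mult_left_mono)
      moreover have "\<mu>\<^sup>2 * (norm e)\<^sup>2 \<le> \<mu>\<^sup>2 * (M * norm d)\<^sup>2"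
        using de(2) by (intro mult_left_mono power_mono) auto
      ultimately show ?thesis by linarith
    qed
    also have "\<dots> = (1 - c\<^sup>2 / M\<^sup>2) * (norm d)\<^sup>2"
      using \<open>M > 0\<close> by (simp add: \<mu>_def field_simps power2_eq_square)
    also have "\<dots> = (k * norm d)\<^sup>2"
      using \<open>k\<^sup>2 = 1 - c\<^sup>2 / M\<^sup>2\<close> by (simp only: power_mult_distrib)
    finally have "norm (d - \<mu> *\<^sub>R e) \<le> k * norm d"
      by (rule power2_le_imp_le) (use \<open>0 \<le> k\<close> in simp)
    moreover have "(x - \<mu> *\<^sub>R B x) - (y - \<mu> *\<^sub>R B y) = d - \<mu> *\<^sub>R e"
      unfolding d_def e_def by (simp add: algebra_simps)
    ultimately show ?thesis
      unfolding dist_norm by (simp only: d_def)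
  qed
  then show thesis
    using that \<open>\<mu> > 0\<close> \<open>0 \<le> k\<close> \<open>k < 1\<close> by blast
qed

(* With F = id, GVI(B,id,C) is the classical variational inequality VI(B,C). *)
lemma strongly_monotone_VI_solution_exists:
  fixes B :: "'a::{real_inner,complete_space} \<Rightarrow> 'a"
  assumes C: "C \<noteq> {}" "closed C" "convex C"
    and B: "c > 0" "strongly_monotone c B" "L-lipschitz_on UNIV B"
  shows "\<exists>z. GVI_solution B id C z"
proof -
  obtain \<mu> k where "\<mu> > 0" "0 \<le> k" "k < 1"
    and step: "\<And>x y. dist (x - \<mu> *\<^sub>R B x) (y - \<mu> *\<^sub>R B y) \<le> k * dist x y"
    using strongly_monotone_forward_step_contraction[OF B] by blast
  define T where "T x = metric_proj C (x - \<mu> *\<^sub>R B x)" for x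
  have "dist (T x) (T y) \<le> k * dist x y" for x y
    unfolding T_def using metric_proj_dist_le[OF C] step order_trans by blast
  then obtain z where "T z = z"
    using banach_fix_type[OF \<open>0 \<le> k\<close> \<open>k < 1\<close>] by blast
  have "z \<in> C"
    using metric_proj_in[OF C] \<open>T z = z\<close> unfolding T_def by metis
  moreover have "inner (B z) (y - z) \<ge> 0" if "y \<in> C" for y
  proof -
    have "inner ((z - \<mu> *\<^sub>R B z) - z) (y - z) \<le> 0"
      using metric_proj_inner_le[OF C that, of "z - \<mu> *\<^sub>R B z"] \<open>T z = z\<close>
      unfolding T_def by simp
    then show ?thesis
      using \<open>\<mu> > 0\<close> by (simp add: zero_le_mult_iff)
  qed
  ultimately show ?thesis
    unfolding GVI_solution_def by auto
qed

lemma strongly_monotone_surj: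
  fixes B :: "'a::{real_inner,complete_space} \<Rightarrow> 'a"
  assumes "c > 0" "strongly_monotone c B" "L-lipschitz_on UNIV B"
  shows "surj B"
proof -
  have "t \<in> range B" for t
  proof -
    have "strongly_monotone c (\<lambda>x. B x - t)" "L-lipschitz_on UNIV (\<lambda>x. B x - t)"
      using assms(2,3) by (simp_all add: strongly_monotone_def lipschitz_on_def dist_norm)
    then obtain z where "GVI_solution (\<lambda>x. B x - t) id UNIV z"
      using strongly_monotone_VI_solution_exists[of UNIV c] assms(1) by blast
    then have "\<forall>y. inner (B z - t) (y - z) \<ge> 0"
      unfolding GVI_solution_def by simp
    moreover define w where "w = B z - t"
    ultimately have "inner w ((z - w) - z) \<ge> 0"
      by blast
    then have "w = 0"
      using inner_ge_zero[of w] by (simp add: order_antisym)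
    then show ?thesis
      unfolding w_def by (metis rangeI right_minus_eq)
  qed
  then show ?thesis
    by blast
qed

lemma strongly_monotone_bij:
  fixes B :: "'a::{real_inner,complete_space} \<Rightarrow> 'a"
  assumes "c > 0" "strongly_monotone c B" "L-lipschitz_on UNIV B"
  shows "bij B"
  using strongly_monotone_inj[OF assms(1,2)] strongly_monotone_surj[OF assms] by (rule bijI)

lemma couple_strongly_monotone_id_iff [simp]:
  "couple_strongly_monotone c B id \<longleftrightarrow> strongly_monotone c B"
  unfolding couple_strongly_monotone_def strongly_monotone_def by simp

lemma strongly_monotone_comp_inv:
  assumes "couple_strongly_monotone c A F" "c \<ge> 0" "surj A" "L-lipschitz_on UNIV A"
  shows "strongly_monotone (c / L\<^sup>2) (F \<circ> inv A)"
  unfolding strongly_monotone_def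
proof (intro allI)
  fix w w'
  define x x' where "x = inv A w" and "x' = inv A w'"
  have "A x = w" "A x' = w'"
    unfolding x_def x'_def using assms(3) by (simp_all add: surj_f_inv_f)
  have "c / L\<^sup>2 * (norm (w - w'))\<^sup>2 \<le> c * (norm (x - x'))\<^sup>2"
  proof (cases "L = 0")
    case False
    have "norm (w - w') \<le> L * norm (x - x')"
      using lipschitz_onD[OF assms(4), of x x'] \<open>A x = w\<close> \<open>A x' = w'\<close> by (simp add: dist_norm)
    then have "(norm (w - w'))\<^sup>2 \<le> L\<^sup>2 * (norm (x - x'))\<^sup>2"
      by (metis norm_ge_zero power_mono power_mult_distrib)
    then show ?thesis
      using False \<open>c \<ge> 0\<close> by (simp add: field_simps mult_left_mono)
  qed (use \<open>c \<ge> 0\<close> in simp)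
  also have "\<dots> \<le> inner (A x - A x') (F x - F x')"
    using assms(1) unfolding couple_strongly_monotone_def by blast
  finally show "c / L\<^sup>2 * (norm (w - w'))\<^sup>2 \<le> inner ((F \<circ> inv A) w - (F \<circ> inv A) w') (w - w')"
    using \<open>A x = w\<close> \<open>A x' = w'\<close> by (simp add: x_def x'_def inner_commute)
qed

lemma couple_strongly_monotone_comp_inv:
  assumes "c > 0" "couple_strongly_monotone c A F" "surj A" "L-lipschitz_on UNIV A"
  obtains c' where "c' > 0" "strongly_monotone c' (F \<circ> inv A)"
proof
  show "strongly_monotone (c / (L + 1)\<^sup>2) (F \<circ> inv A)"
    using assms(1-3) lipschitz_on_mono[OF assms(4)] by (intro strongly_monotone_comp_inv) auto
  show "c / (L + 1)\<^sup>2 > 0"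
    using assms(1) lipschitz_on_nonneg[OF assms(4)] by simp
qed

lemma lipschitz_on_inv:
  assumes "c > 0" "strongly_monotone c B" "surj B"
  shows "(1 / c)-lipschitz_on UNIV (inv B)"
proof (rule lipschitz_onI)
  fix w w'
  have "c * dist (inv B w) (inv B w') \<le> dist w w'"
    using strongly_monotone_dist_le[OF assms(2)] assms(3) by (metis surj_f_inv_f)
  then show "dist (inv B w) (inv B w') \<le> 1 / c * dist w w'"
    using assms(1) by (simp add: field_simps)
qed (use assms(1) in simp)

lemma GVI_solution_comp_inv:
  assumes "surj A" "surj (F \<circ> inv A)" "GVI_solution (inv (F \<circ> inv A)) id C z"
  shows "GVI_solution A F C (inv A (inv (F \<circ> inv A) z))"
proof -
  have "F (inv A (inv (F \<circ> inv A) z)) = z"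
    using surj_f_inv_f[OF assms(2)] by (metis comp_apply)
  then show ?thesis
    using assms(3) surj_f_inv_f[OF assms(1)] by (simp add: GVI_solution_def)
qed

lemma GVI_solution_unique:
  assumes "gam > 0" "couple_strongly_monotone gam A F"
    and "GVI_solution A F C x" "GVI_solution A F C x'"
  shows "x = x'"
proof -
  have "inner (A x) (F x' - F x) \<ge> 0" "inner (A x') (F x - F x') \<ge> 0"
    using assms(3,4) unfolding GVI_solution_def by blast+
  moreover have "inner (A x - A x') (F x - F x') = - inner (A x) (F x' - F x) - inner (A x') (F x - F x')"
    by (simp add: inner_diff_left inner_diff_right algebra_simps)
  ultimately have "gam * (norm (x - x'))\<^sup>2 \<le> 0"
    using assms(2) unfolding couple_strongly_monotone_def by (smt (verit))
  then show ?thesis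
    using assms(1) by (simp add: mult_le_0_iff)
qed

theorem theorem2p2:
  fixes C :: "'a::{real_inner, complete_space} set"
    and A F :: "'a \<Rightarrow> 'a"
    and L_A L_F lam gam :: real
  assumes "C \<noteq> {}" and "closed C" and "convex C"
    and "lipschitz_on L_A UNIV A" and "lipschitz_on L_F UNIV F"
    and "lam > 0" and "strongly_monotone lam A"
    and "gam > 0" and "couple_strongly_monotone gam A F"
  shows "\<exists>!x. GVI_solution A F C x"
proof -
  have "bij A"
    using strongly_monotone_bij[OF assms(6,7,4)] .
  define G where "G = F \<circ> inv A"
  obtain c where "c > 0" and mono_G: "strongly_monotone c G"
    using couple_strongly_monotone_comp_inv[OF assms(8,9) bij_is_surj assms(4)] \<open>bij A\<close>
    unfolding G_def by blast
  have lip_G: "(L_F * (1 / lam))-lipschitz_on UNIV G"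
    unfolding G_def using assms(5,6,7) \<open>bij A\<close>
    by (intro lipschitz_on_compose lipschitz_on_inv) (auto intro: lipschitz_on_subset simp: bij_is_surj)
  have "surj G"
    using strongly_monotone_surj[OF \<open>c > 0\<close> mono_G lip_G] .
  obtain c' where "c' > 0" "strongly_monotone c' (inv G)"
    using couple_strongly_monotone_comp_inv[of c G id] \<open>c > 0\<close> mono_G \<open>surj G\<close> lip_G by auto
  then obtain z where "GVI_solution (inv G) id C z"
    using strongly_monotone_VI_solution_exists[OF assms(1-3)]
      lipschitz_on_inv[OF \<open>c > 0\<close> mono_G \<open>surj G\<close>] by blast
  then have "GVI_solution A F C (inv A (inv G z))"
    using GVI_solution_comp_inv[OF bij_is_surj[OF \<open>bij A\<close>]] \<open>surj G\<close> unfolding G_def by blast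
  then show ?thesis
    using GVI_solution_unique[OF assms(8,9)] by blast
qed

end
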